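(* Let $b\ge1$, $0\le r\le b$ and $k$ be integers with $k\ge\frac{15}{2}\ln b+16$. Let $\Omega'$ be a probability distribution on the set of functions $[r]\to[b]$ such that for every $I\subseteq[r]$ with $|I|\le k$ and every $x:I\to[b]$, $\Pr_{\omega\sim\Omega'}\big(\bigwedge_{i\in I}\omega(i)=x(i)\big)=b^{-|I|}$. Let $X'(\omega):=|\omega([r])|$ and $\rho(r):=b(1-(1-b^{-1})^r)$. Then \[ \Pr_{\omega\sim\Omega'}\big(|X'(\omega)-\rho(r)|>9\,b^{-1/2}r\big)\le 2^{-6}. \]
   Context: $[N]:=\{0,\dots,N-1\}$; $\omega([r])$ is the image of $\omega$. *)

theory Defs
  imports "HOL-Probability.Probability"
begin

definition rho :: "nat \<Rightarrow> nat \<Rightarrow> real" where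
  "rho b r = real b * (1 - (1 - 1 / real b) ^ r)"

end

theory Submission
  imports Defs
begin

text \<open>Let \<open>N(\<omega>)\<close> be the number of values in \<open>[b]\<close> missed by \<open>\<omega>\<close>, so that
  \<open>X'(\<omega>) - \<rho>(r) = b (1 - 1/b)^r - N(\<omega>)\<close>, where \<open>b (1 - 1/b)^r\<close> is the mean of \<open>N\<close> in the
  fully independent model. The probability that \<open>\<omega>\<close> avoids a set \<open>T\<close> of one or two values
  is the expectation of \<open>[A = 0]\<close> with \<open>A = #{i. \<omega>(i) \<in> T}\<close>; the Bonferroni inequalities
  approximate this by an alternating sum of the binomial moments \<open>E (A choose s)\<close>, \<open>s \<le> k\<close>,
  which \<open>k\<close>-wise independence makes equal to those of the fully independent model. Hence
  this probability is \<open>(1 - |T|/b)^r\<close> up to \<open>2 (r choose k) (|T|/b)^k\<close>, and the second moment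
  of \<open>N\<close> about \<open>b (1 - 1/b)^r\<close> exceeds the variance of the number of empty bins in the
  independent model, at most \<open>r^2/b\<close>, by a term which \<open>k \<ge> 15/2 ln b + 16\<close> makes
  negligible, and Chebyshev's inequality finishes the proof.\<close>

lemma bonferroni_binomial_sign:
  fixes x :: real
  assumes "0 \<le> x" and "x \<le> 1"
  shows "0 \<le> (-1)^m * ((1 - x)^r - (\<Sum>s<m. (-1)^s * real (r choose s) * x^s)) \<and>
         (-1)^m * ((1 - x)^r - (\<Sum>s<m. (-1)^s * real (r choose s) * x^s)) \<le> real (r choose m) * x^m"
proof (induction r arbitrary: m)
  case 0
  then show ?case by (cases m) (simp_all add: sum.lessThan_Suc_shift del: sum.lessThan_Suc)
next
  case (Suc r)
  define F where "F m = (1 - x)^r - (\<Sum>s<m. (-1)^s * real (r choose s) * x^s)" for m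
  show ?case
  proof (cases m)
    case 0
    then show ?thesis using assms power_le_one[of "1 - x" "Suc r"] by simp
  next
    case (Suc m')
    have "(\<Sum>s<Suc m'. (-1)^s * real (Suc r choose s) * x^s) =
        (\<Sum>s<Suc m'. (-1)^s * real (r choose s) * x^s) - x * (\<Sum>s<m'. (-1)^s * real (r choose s) * x^s)"
      by (simp add: sum.lessThan_Suc_shift algebra_simps sum.distrib sum_distrib_left sum_negf sum_subtractf
          del: sum.lessThan_Suc)
    then have diff: "(1 - x)^Suc r - (\<Sum>s<Suc m'. (-1)^s * real (Suc r choose s) * x^s) = F (Suc m') - x * F m'"
      unfolding F_def by (simp add: algebra_simps)
    have split: "(-1)^Suc m' * ((1 - x)^Suc r - (\<Sum>s<Suc m'. (-1)^s * real (Suc r choose s) * x^s))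
        = (-1)^Suc m' * F (Suc m') + x * ((-1)^m' * F m')"
      unfolding diff by (simp add: algebra_simps)
    have high: "0 \<le> (-1)^Suc m' * F (Suc m') \<and> (-1)^Suc m' * F (Suc m') \<le> real (r choose Suc m') * x^Suc m'"
      using Suc.IH[of "Suc m'"] unfolding F_def by simp
    have "0 \<le> (-1)^m' * F m' \<and> (-1)^m' * F m' \<le> real (r choose m') * x^m'"
      using Suc.IH[of m'] unfolding F_def by simp
    then have low: "0 \<le> x * ((-1)^m' * F m') \<and> x * ((-1)^m' * F m') \<le> x * (real (r choose m') * x^m')"
      using assms by (simp add: mult_left_mono)
    show ?thesis unfolding Suc split using high low by (simp add: algebra_simps)
  qed
qed

lemma bonferroni_binomial:
  fixes x :: real
  assumes "0 \<le> x" and "x \<le> 1"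
  shows "\<bar>(1 - x)^r - (\<Sum>s<m. (-1)^s * real (r choose s) * x^s)\<bar> \<le> real (r choose m) * x^m"
proof -
  let ?D = "(1 - x)^r - (\<Sum>s<m. (-1)^s * real (r choose s) * x^s)"
  have "\<bar>?D\<bar> = \<bar>(-1)^m * ?D\<bar>" by (simp add: abs_mult)
  then show ?thesis using bonferroni_binomial_sign[OF assms, of m r] by linarith
qed

lemma diff_power_le:
  fixes a c :: real
  assumes "0 \<le> c" and "c \<le> a"
  shows "a^n - c^n \<le> real n * a^(n - 1) * (a - c)"
proof (induction n)
  case (Suc n)
  have "a^Suc n - c^Suc n = a * (a^n - c^n) + c^n * (a - c)" by (simp add: algebra_simps)
  also have "\<dots> \<le> a * (real n * a^(n - 1) * (a - c)) + a^n * (a - c)"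
    using Suc assms by (intro add_mono mult_left_mono mult_right_mono power_mono) auto
  also have "\<dots> = real (Suc n) * a^n * (a - c)"
    by (cases n) (simp_all add: algebra_simps)
  finally show ?case by simp
qed simp

lemma diff_power_ge:
  fixes a c :: real
  assumes "0 \<le> c" and "c \<le> a"
  shows "real n * c^(n - 1) * (a - c) \<le> a^n - c^n"
proof (induction n)
  case (Suc n)
  have "real (Suc n) * c^n * (a - c) = c * (real n * c^(n - 1) * (a - c)) + c^n * (a - c)"
    by (cases n) (simp_all add: algebra_simps)
  also have "\<dots> \<le> a * (a^n - c^n) + c^n * (a - c)"
    using Suc assms by (intro add_mono mult_mono) auto
  also have "\<dots> = a^Suc n - c^Suc n" by (simp add: algebra_simps)
  finally show ?case by simp
qed simp

text \<open>The left-hand side is the variance of the number of empty bins when \<open>r\<close> balls are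
  thrown independently and uniformly into \<open>b\<close> bins.\<close>

lemma empty_bins_variance_le:
  assumes "1 \<le> b"
  shows "real b * (1 - 1 / real b)^r + real b * (real b - 1) * (1 - 2 / real b)^r
           - (real b * (1 - 1 / real b)^r)^2 \<le> real r^2 / real b"
proof (cases "b = 1 \<or> r = 0")
  case True
  then show ?thesis by (cases r) (auto simp: power2_eq_square algebra_simps)
next
  case False
  then have b: "real b \<ge> 2" and r: "r \<ge> 1" using assms by auto
  define u where "u = 1 - 1 / real b"
  define v where "v = 1 - 2 / real b"
  have v: "0 \<le> v" "v \<le> u" and u: "0 \<le> u" "u \<le> 1"
    unfolding u_def v_def using b by (auto simp: field_simps)
  have uu: "u^2 = v + 1 / real b^2"
    unfolding u_def v_def using b by (simp add: field_simps power2_eq_square)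
  have "real b * u^r + real b * (real b - 1) * v^r - (real b * u^r)^2
      = real b * (u^r - v^r) - real b^2 * ((u^2)^r - v^r)"
    by (simp add: algebra_simps power2_eq_square flip: power_mult power2_eq_square)
  also have "\<dots> \<le> real b * (real r * u^(r - 1) / real b) - real b^2 * (real r * v^(r - 1) / real b^2)"
  proof (intro diff_mono mult_left_mono)
    show "u^r - v^r \<le> real r * u^(r - 1) / real b"
      using diff_power_le[OF v, of r] unfolding u_def v_def using b by (simp add: field_simps)
    show "real r * v^(r - 1) / real b^2 \<le> (u^2)^r - v^r"
      using diff_power_ge[of v "u^2" r] v uu by (simp add: field_simps)
  qed auto
  also have "\<dots> = real r * (u^(r - 1) - v^(r - 1))" using b by (simp add: field_simps)
  also have "\<dots> \<le> real r * (real (r - 1) * u^(r - 2) * (u - v))"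
    using diff_power_le[OF v, of "r - 1"] by (intro mult_left_mono) (auto simp: numeral_2_eq_2)
  also have "\<dots> \<le> real r * (real r * 1 * (1 / real b))"
    using u b unfolding u_def v_def by (intro mult_left_mono mult_mono power_le_one) auto
  finally show ?thesis unfolding u_def v_def by (simp add: power2_eq_square)
qed

lemma fact_ge_four_power: "16 \<le> m \<Longrightarrow> 64 * 4^m \<le> (fact m :: nat)"
proof (induction m rule: nat_induct_at_least)
  case base
  then show ?case by (simp add: fact_numeral)
next
  case (Suc n)
  have "(64::nat) * 4^Suc n = 4 * (64 * 4^n)" by simp
  also have "\<dots> \<le> Suc n * fact n" using Suc by (intro mult_mono) auto
  finally show ?case by simp
qed

lemma binomial_tail_le:
  assumes "16 \<le> m" and "r \<le> b" and "real b \<le> 2^m"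
  shows "real b^2 * (real (r choose m) * (2 / real b)^m) \<le> real r^2 / (64 * real b)"
proof (cases "b = 0")
  case False
  then have b: "real b > 0" by simp
  have "m = 2 + (m - 2)" using assms(1) by simp
  then have split: "x^m = x^2 * x^(m - 2)" for x :: real
    by (metis power_add)
  have "real (r choose m) * fact m \<le> real r ^ m"
    using binomial_fact_pow[of r m] by (metis of_nat_fact of_nat_le_iff of_nat_mult of_nat_power)
  also have "\<dots> \<le> real r^2 * real b ^ (m - 2)"
    unfolding split[of "real r"] using assms(2) by (intro mult_left_mono power_mono) auto
  finally have choose_le: "real (r choose m) * fact m \<le> real r^2 * real b ^ (m - 2)" .
  have "64 * real b * 2^m \<le> 64 * 2^m * 2^m"
    using assms(3) by simp
  also have "\<dots> = 64 * 4^m"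
    by (simp flip: power_mult_distrib)
  also have "\<dots> \<le> fact m"
  proof -
    have "real (64 * 4^m) \<le> real (fact m)"
      using fact_ge_four_power[OF assms(1)] by (simp only: of_nat_le_iff)
    then show ?thesis by simp
  qed
  finally have fact_ge: "64 * real b * 2^m \<le> fact m" .
  have "real b^2 * (real (r choose m) * (2 / real b)^m) = real (r choose m) * 2^m / real b ^ (m - 2)"
    using b by (simp add: power_divide split[of "real b"])
  also have "\<dots> \<le> real r^2 * 2^m / fact m"
  proof -
    have "real (r choose m) * fact m * 2^m \<le> real r^2 * real b ^ (m - 2) * 2^m"
      using choose_le by (intro mult_right_mono) auto
    then show ?thesis using b by (simp add: field_simps)
  qed
  also have "\<dots> \<le> real r^2 * 2^m / (64 * real b * 2^m)"
    using fact_ge b by (intro divide_left_mono) auto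
  also have "\<dots> = real r^2 / (64 * real b)"
    by simp
  finally show ?thesis .
qed (use assms in simp)

lemma double_sum_deviation_le:
  fixes P :: "'b \<Rightarrow> 'b \<Rightarrow> real"
  assumes "finite C" and "0 \<le> q" and "q \<le> 1"
    and diag: "\<And>j. j \<in> C \<Longrightarrow> \<bar>P j j - q\<bar> \<le> e"
    and offdiag: "\<And>j j'. j \<in> C \<Longrightarrow> j' \<in> C \<Longrightarrow> j \<noteq> j' \<Longrightarrow> \<bar>P j j' - q'\<bar> \<le> e"
  shows "(\<Sum>j\<in>C. \<Sum>j'\<in>C. P j j') - 2 * (real (card C) * q) * (\<Sum>j\<in>C. P j j) + (real (card C) * q)^2
         \<le> real (card C) * q + real (card C) * (real (card C) - 1) * q' - (real (card C) * q)^2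
           + 3 * real (card C)^2 * e"
proof -
  define b where "b = real (card C)"
  define Q where "Q j j' = (if j = j' then q else q')" for j j' :: 'b
  have "(\<Sum>j'\<in>C. Q j j') = q + (b - 1) * q'" if "j \<in> C" for j
  proof -
    have "(\<Sum>j'\<in>C. Q j j') = (\<Sum>j'\<in>C. q' + (if j = j' then q - q' else 0))"
      by (intro sum.cong) (auto simp: Q_def)
    also have "\<dots> = b * q' + (q - q')"
      using that assms(1) by (simp add: sum.distrib b_def)
    finally show ?thesis by (simp add: algebra_simps)
  qed
  then have "(\<Sum>j\<in>C. \<Sum>j'\<in>C. Q j j') = (\<Sum>j\<in>C. q + (b - 1) * q')"
    by (rule sum.cong[OF refl])
  then have sum_Q: "(\<Sum>j\<in>C. \<Sum>j'\<in>C. Q j j') = b * q + b * (b - 1) * q'"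
    by (simp add: b_def algebra_simps)
  have dev2: "\<bar>\<Sum>j\<in>C. \<Sum>j'\<in>C. P j j' - Q j j'\<bar> \<le> b^2 * e"
  proof -
    have "\<bar>\<Sum>j\<in>C. \<Sum>j'\<in>C. P j j' - Q j j'\<bar> \<le> (\<Sum>j\<in>C. \<Sum>j'\<in>C. \<bar>P j j' - Q j j'\<bar>)"
      by (rule order.trans[OF sum_abs sum_mono[OF sum_abs]])
    also have "\<dots> \<le> (\<Sum>j\<in>C. \<Sum>j'\<in>C. e)"
      by (intro sum_mono) (auto simp: Q_def diag offdiag)
    finally show ?thesis by (simp add: b_def power2_eq_square)
  qed
  have "\<bar>\<Sum>j\<in>C. P j j - q\<bar> \<le> (\<Sum>j\<in>C. \<bar>P j j - q\<bar>)"
    by (rule sum_abs)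
  also have "\<dots> \<le> b * e"
    using sum_mono[of C "\<lambda>j. \<bar>P j j - q\<bar>" "\<lambda>_. e"] diag by (simp add: b_def)
  finally have "\<bar>2 * (b * q) * (\<Sum>j\<in>C. P j j - q)\<bar> \<le> (2 * b) * (b * e)"
    unfolding abs_mult using assms(2,3) by (intro mult_mono) (auto simp: b_def mult_left_le)
  then have dev1: "\<bar>2 * (b * q) * (\<Sum>j\<in>C. P j j - q)\<bar> \<le> 2 * b^2 * e"
    by (simp add: power2_eq_square algebra_simps)
  have "(\<Sum>j\<in>C. \<Sum>j'\<in>C. P j j') - 2 * (b * q) * (\<Sum>j\<in>C. P j j) + (b * q)^2
      = b * q + b * (b - 1) * q' - (b * q)^2
        + (\<Sum>j\<in>C. \<Sum>j'\<in>C. P j j' - Q j j') - 2 * (b * q) * (\<Sum>j\<in>C. P j j - q)"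
    using sum_Q by (simp add: sum_subtractf b_def power2_eq_square algebra_simps)
  with dev1 dev2 show ?thesis unfolding b_def by linarith
qed

definition kwise_uniform :: "('a \<Rightarrow> 'b) pmf \<Rightarrow> nat \<Rightarrow> 'a set \<Rightarrow> 'b set \<Rightarrow> bool" where
  "kwise_uniform M k D C \<longleftrightarrow> (\<forall>I x. I \<subseteq> D \<longrightarrow> card I \<le> k \<longrightarrow> x \<in> I \<rightarrow>\<^sub>E C \<longrightarrow>
     measure_pmf.prob M {\<omega>. \<forall>i\<in>I. \<omega> i = x i} = (1 / real (card C)) ^ card I)"

lemma kwise_uniform_prob_all_in:
  assumes "kwise_uniform M k D C" and "finite D" and "finite C"
    and "S \<subseteq> D" and "card S \<le> k" and "T \<subseteq> C"
  shows "measure_pmf.prob M {\<omega>. \<forall>i\<in>S. \<omega> i \<in> T} = (real (card T) / real (card C)) ^ card S"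
proof -
  have S: "finite S" and T: "finite T" using assms(2-4,6) finite_subset by auto
  have union: "{\<omega>. \<forall>i\<in>S. \<omega> i \<in> T} = (\<Union>x\<in>S \<rightarrow>\<^sub>E T. {\<omega>. \<forall>i\<in>S. \<omega> i = x i})"
    by (auto intro!: bexI[of _ "restrict _ S"])
  have disjoint: "disjoint_family_on (\<lambda>x. {\<omega>. \<forall>i\<in>S. \<omega> i = x i}) (S \<rightarrow>\<^sub>E T)"
    unfolding disjoint_family_on_def by (auto simp: PiE_iff extensional_def fun_eq_iff) metis
  have "measure_pmf.prob M {\<omega>. \<forall>i\<in>S. \<omega> i \<in> T}
      = (\<Sum>x\<in>S \<rightarrow>\<^sub>E T. measure_pmf.prob M {\<omega>. \<forall>i\<in>S. \<omega> i = x i})"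
    unfolding union using S T disjoint
    by (subst measure_pmf.finite_measure_finite_Union) (auto simp: finite_PiE)
  also have "\<dots> = (\<Sum>x\<in>S \<rightarrow>\<^sub>E T. (1 / real (card C)) ^ card S)"
  proof (rule sum.cong[OF refl])
    fix x assume "x \<in> S \<rightarrow>\<^sub>E T"
    then have "x \<in> S \<rightarrow>\<^sub>E C" using assms(6) by (auto simp: PiE_iff)
    then show "measure_pmf.prob M {\<omega>. \<forall>i\<in>S. \<omega> i = x i} = (1 / real (card C)) ^ card S"
      using assms(1,4,5) unfolding kwise_uniform_def by blast
  qed
  also have "\<dots> = (real (card T) / real (card C)) ^ card S"
    using S by (simp add: card_PiE power_divide)
  finally show ?thesis .
qed

lemma kwise_uniform_expectation_choose:
  assumes "kwise_uniform M k D C" and "finite (set_pmf M)" and "finite D" and "finite C"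
    and "T \<subseteq> C" and "s \<le> k"
  shows "measure_pmf.expectation M (\<lambda>\<omega>. real (card {i\<in>D. \<omega> i \<in> T} choose s))
         = real (card D choose s) * (real (card T) / real (card C)) ^ s"
proof -
  define Sub where "Sub = {S. S \<subseteq> D \<and> card S = s}"
  have Sub: "finite Sub" "card Sub = card D choose s"
    unfolding Sub_def using assms(3) by (simp_all add: n_subsets)
  have count: "real (card {i\<in>D. \<omega> i \<in> T} choose s) = (\<Sum>S\<in>Sub. indicator {\<omega>. \<forall>i\<in>S. \<omega> i \<in> T} \<omega>)"
    for \<omega>
  proof -
    have "{S. S \<subseteq> {i\<in>D. \<omega> i \<in> T} \<and> card S = s} = {S\<in>Sub. \<forall>i\<in>S. \<omega> i \<in> T}"
      unfolding Sub_def by auto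
    then have "card {i\<in>D. \<omega> i \<in> T} choose s = card {S\<in>Sub. \<forall>i\<in>S. \<omega> i \<in> T}"
      using n_subsets[of "{i\<in>D. \<omega> i \<in> T}" s] assms(3) by simp
    then show ?thesis using Sub by (simp add: indicator_def Int_def)
  qed
  have "measure_pmf.expectation M (\<lambda>\<omega>. real (card {i\<in>D. \<omega> i \<in> T} choose s))
      = (\<Sum>S\<in>Sub. measure_pmf.prob M {\<omega>. \<forall>i\<in>S. \<omega> i \<in> T})"
    unfolding count using assms(2) by (simp add: integrable_measure_pmf_finite)
  also have "\<dots> = (\<Sum>S\<in>Sub. (real (card T) / real (card C)) ^ s)"
    using assms by (intro sum.cong refl kwise_uniform_prob_all_in[THEN trans]) (auto simp: Sub_def)
  finally show ?thesis using Sub by simp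
qed

lemma kwise_uniform_prob_avoid:
  assumes "kwise_uniform M k D C" and "finite (set_pmf M)" and "finite D" and "finite C"
    and "T \<subseteq> C"
  shows "\<bar>measure_pmf.prob M {\<omega>. \<forall>i\<in>D. \<omega> i \<notin> T} - (1 - real (card T) / real (card C)) ^ card D\<bar>
         \<le> 2 * real (card D choose k) * (real (card T) / real (card C)) ^ k"
proof -
  define t where "t = real (card T) / real (card C)"
  define A where "A \<omega> = card {i\<in>D. \<omega> i \<in> T}" for \<omega> :: "'a \<Rightarrow> 'b"
  define S where "S = (\<Sum>s<k. (-1)^s * real (card D choose s) * t^s)"
  have "card T \<le> card C" using assms(4,5) by (rule card_mono)
  then have t: "0 \<le> t" "t \<le> 1" unfolding t_def by (auto simp: divide_le_eq_1)
  have integrable: "integrable (measure_pmf M) f" for f :: "('a \<Rightarrow> 'b) \<Rightarrow> real"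
    using assms(2) by (rule integrable_measure_pmf_finite)
  have moment: "measure_pmf.expectation M (\<lambda>\<omega>. real (A \<omega> choose s)) = real (card D choose s) * t^s"
    if "s \<le> k" for s
    unfolding A_def t_def using assms that by (rule kwise_uniform_expectation_choose)
  have "measure_pmf.expectation M (\<lambda>\<omega>. \<Sum>s<k. (-1)^s * real (A \<omega> choose s)) = S"
    using moment by (simp add: integrable S_def mult.assoc)
  then have "measure_pmf.prob M {\<omega>. \<forall>i\<in>D. \<omega> i \<notin> T} - S = measure_pmf.expectation M
      (\<lambda>\<omega>. indicator {\<omega>. \<forall>i\<in>D. \<omega> i \<notin> T} \<omega> - (\<Sum>s<k. (-1)^s * real (A \<omega> choose s)))"
    by (simp add: integrable)
  also have "\<bar>\<dots>\<bar> \<le> measure_pmf.expectation M (\<lambda>\<omega>. real (A \<omega> choose k))"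
  proof (intro order.trans[OF integral_abs_bound] integral_mono integrable)
    fix \<omega>
    have "A \<omega> = 0 \<longleftrightarrow> (\<forall>i\<in>D. \<omega> i \<notin> T)"
      unfolding A_def using assms(3) by auto
    txt \<open>At \<open>x = 1\<close> the Bonferroni inequality is truncated inclusion-exclusion for \<open>[A = 0]\<close>.\<close>
    then have "indicator {\<omega>. \<forall>i\<in>D. \<omega> i \<notin> T} \<omega> = (1 - 1 :: real) ^ A \<omega>"
      by (simp add: indicator_def power_0_left)
    then show "\<bar>indicator {\<omega>. \<forall>i\<in>D. \<omega> i \<notin> T} \<omega> - (\<Sum>s<k. (-1)^s * real (A \<omega> choose s))\<bar>
        \<le> real (A \<omega> choose k)"
      using bonferroni_binomial[of 1 "A \<omega>" k] by simp
  qed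
  also have "\<dots> = real (card D choose k) * t^k"
    by (rule moment) simp
  finally have "\<bar>measure_pmf.prob M {\<omega>. \<forall>i\<in>D. \<omega> i \<notin> T} - S\<bar> \<le> real (card D choose k) * t^k" .
  moreover have "\<bar>(1 - t) ^ card D - S\<bar> \<le> real (card D choose k) * t^k"
    unfolding S_def using t by (rule bonferroni_binomial)
  ultimately show ?thesis unfolding t_def by linarith
qed

lemma expectation_card_image_deviation_sq:
  assumes supp: "set_pmf M \<subseteq> D \<rightarrow>\<^sub>E C" and D: "finite D" and C: "finite C"
  shows "measure_pmf.expectation M (\<lambda>\<omega>. (real (card (\<omega> ` D)) - rho (card C) r)^2)
         = (\<Sum>j\<in>C. \<Sum>j'\<in>C. measure_pmf.prob M {\<omega>. \<forall>i\<in>D. \<omega> i \<notin> {j, j'}})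
           - 2 * (real (card C) - rho (card C) r) * (\<Sum>j\<in>C. measure_pmf.prob M {\<omega>. \<forall>i\<in>D. \<omega> i \<noteq> j})
           + (real (card C) - rho (card C) r)^2"
proof -
  define \<nu> where "\<nu> = real (card C) - rho (card C) r"
  define Z :: "'b \<Rightarrow> 'b \<Rightarrow> ('a \<Rightarrow> 'b) \<Rightarrow> real"
    where "Z j j' = indicator {\<omega>. \<forall>i\<in>D. \<omega> i \<notin> {j, j'}}" for j j'
  have fin: "finite (set_pmf M)"
    using supp by (rule finite_subset) (simp add: D C finite_PiE)
  have missed: "real (card (\<omega> ` D)) - rho (card C) r = \<nu> - (\<Sum>j\<in>C. Z j j \<omega>)"
    if "\<omega> \<in> set_pmf M" for \<omega>
  proof -
    have "\<omega> ` D \<subseteq> C" using that supp by (auto simp: PiE_iff)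
    moreover have "C \<inter> {j. \<forall>i\<in>D. \<omega> i \<notin> {j, j}} = C - \<omega> ` D" by auto
    then have "(\<Sum>j\<in>C. Z j j \<omega>) = real (card (C - \<omega> ` D))"
      using C by (simp add: Z_def indicator_def)
    ultimately show ?thesis
      using C by (simp add: \<nu>_def card_Diff_subset card_mono finite_subset)
  qed
  have Z_mult: "Z j j \<omega> * Z j' j' \<omega> = Z j j' \<omega>" for j j' \<omega>
    by (auto simp: Z_def indicator_def)
  have square: "(real (card (\<omega> ` D)) - rho (card C) r)^2
      = (\<Sum>j\<in>C. \<Sum>j'\<in>C. Z j j' \<omega>) - 2 * \<nu> * (\<Sum>j\<in>C. Z j j \<omega>) + \<nu>^2"
    if "\<omega> \<in> set_pmf M" for \<omega>
  proof -
    have "(\<Sum>j\<in>C. Z j j \<omega>)^2 = (\<Sum>j\<in>C. \<Sum>j'\<in>C. Z j j' \<omega>)"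
      by (simp add: power2_eq_square sum_product Z_mult)
    then show ?thesis
      unfolding missed[OF that] power2_diff by (simp add: algebra_simps)
  qed
  have "measure_pmf.expectation M (\<lambda>\<omega>. (real (card (\<omega> ` D)) - rho (card C) r)^2)
      = measure_pmf.expectation M
          (\<lambda>\<omega>. (\<Sum>j\<in>C. \<Sum>j'\<in>C. Z j j' \<omega>) - 2 * \<nu> * (\<Sum>j\<in>C. Z j j \<omega>) + \<nu>^2)"
    using square by (intro integral_cong_AE) (auto simp: AE_measure_pmf_iff)
  also have "\<dots> = (\<Sum>j\<in>C. \<Sum>j'\<in>C. measure_pmf.prob M {\<omega>. \<forall>i\<in>D. \<omega> i \<notin> {j, j'}})
      - 2 * \<nu> * (\<Sum>j\<in>C. measure_pmf.prob M {\<omega>. \<forall>i\<in>D. \<omega> i \<noteq> j}) + \<nu>^2"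
    by (simp add: integrable_measure_pmf_finite[OF fin] Z_def)
  finally show ?thesis unfolding \<nu>_def .
qed

lemma kwise_uniform_card_image_second_moment:
  assumes unif: "kwise_uniform M m D C" and supp: "set_pmf M \<subseteq> D \<rightarrow>\<^sub>E C"
    and D: "finite D" and C: "finite C" "C \<noteq> {}" and "card D \<le> card C"
    and "16 \<le> m" and "real (card C) \<le> 2^m"
  shows "measure_pmf.expectation M (\<lambda>\<omega>. (real (card (\<omega> ` D)) - rho (card C) (card D))^2)
         \<le> 5/4 * real (card D)^2 / real (card C)"
proof -
  define b where "b = card C"
  define r where "r = card D"
  define q where "q = (1 - 1 / real b)^r"
  define q' where "q' = (1 - 2 / real b)^r"
  define e where "e = 2 * real (r choose m) * (2 / real b)^m"
  define P where "P j j' = measure_pmf.prob M {\<omega>. \<forall>i\<in>D. \<omega> i \<notin> {j, j'}}" for j j'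
  have b: "1 \<le> b" using C by (simp add: b_def Suc_le_eq card_gt_0_iff)
  have fin: "finite (set_pmf M)"
    using supp by (rule finite_subset) (simp add: D C finite_PiE)
  have "0 \<le> 1 - 1 / real b" "1 - 1 / real b \<le> 1"
    using b by (auto simp: field_simps)
  then have q: "0 \<le> q" "q \<le> 1"
    unfolding q_def by (simp_all add: power_le_one)
  have diag: "\<bar>P j j - q\<bar> \<le> e" if "j \<in> C" for j
  proof -
    have "\<bar>P j j - q\<bar> \<le> 2 * real (r choose m) * (1 / real b)^m"
      using kwise_uniform_prob_avoid[OF unif fin D C(1), of "{j}"] that
      by (simp add: P_def q_def b_def r_def)
    also have "\<dots> \<le> e"
      unfolding e_def by (intro mult_left_mono power_mono divide_right_mono) auto
    finally show ?thesis .
  qed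
  have offdiag: "\<bar>P j j' - q'\<bar> \<le> e" if "j \<in> C" "j' \<in> C" "j \<noteq> j'" for j j'
    using kwise_uniform_prob_avoid[OF unif fin D C(1), of "{j, j'}"] that
    by (simp add: P_def q'_def e_def b_def r_def)
  have "measure_pmf.expectation M (\<lambda>\<omega>. (real (card (\<omega> ` D)) - rho b r)^2)
      = (\<Sum>j\<in>C. \<Sum>j'\<in>C. P j j') - 2 * (real b * q) * (\<Sum>j\<in>C. P j j) + (real b * q)^2"
    using expectation_card_image_deviation_sq[OF supp D C(1), of r]
    by (simp add: P_def rho_def q_def b_def algebra_simps)
  also have "\<dots> \<le> real b * q + real b * (real b - 1) * q' - (real b * q)^2 + 3 * real b^2 * e"
    unfolding b_def using C(1) q diag offdiag by (rule double_sum_deviation_le)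
  also have "\<dots> \<le> real r^2 / real b + 6 * (real r^2 / (64 * real b))"
    using empty_bins_variance_le[OF b, of r] binomial_tail_le[of m r b] assms(6-8)
    unfolding q_def q'_def e_def b_def r_def by (simp add: algebra_simps)
  also have "\<dots> \<le> 5/4 * real r^2 / real b"
    using b by (simp add: field_simps)
  finally show ?thesis unfolding b_def r_def .
qed

lemma prob_abs_gt_le_second_moment:
  fixes f :: "'a \<Rightarrow> real"
  assumes "finite (set_pmf M)" and "0 < \<delta>"
  shows "measure_pmf.prob M {\<omega>. \<delta> < \<bar>f \<omega>\<bar>} \<le> measure_pmf.expectation M (\<lambda>\<omega>. f \<omega>^2) / \<delta>^2"
proof -
  have "measure_pmf.prob M {\<omega>. \<delta> < \<bar>f \<omega>\<bar>} \<le> measure_pmf.prob M {\<omega>. \<delta> \<le> \<bar>f \<omega>\<bar>}"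
    by (intro measure_pmf.finite_measure_mono) auto
  also have "\<dots> \<le> measure_pmf.expectation M (\<lambda>\<omega>. f \<omega>^2) / \<delta>^2"
    using measure_pmf.second_moment_method[of f M \<delta>] assms
    by (simp add: integrable_measure_pmf_finite)
  finally show ?thesis .
qed

lemma le_two_power_if_ln_le:
  fixes x :: real
  assumes "0 < x" and "2 * ln x \<le> real m"
  shows "x \<le> 2^m"
proof -
  have "ln (1 / 2 :: real) \<le> 1 / 2 - 1"
    by (rule ln_le_minus_one) simp
  then have "1 \<le> 2 * ln (2 :: real)"
    by (simp add: ln_div)
  then have "real m \<le> 2 * (real m * ln 2)"
    using mult_left_mono[of 1 "2 * ln 2" "real m"] by (simp add: algebra_simps)
  then have "ln x \<le> real m * ln 2"
    using assms(2) by linarith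
  also have "\<dots> = ln (2^m)"
    by (simp add: ln_realpow)
  finally show ?thesis
    using assms(1) by simp
qed

theorem lemma20:
  fixes b r :: nat and k :: int and \<Omega> :: "(nat \<Rightarrow> nat) pmf"
  assumes "b \<ge> 1" and "r \<le> b"
    and "real_of_int k \<ge> 15 / 2 * ln (real b) + 16"
    and "set_pmf \<Omega> \<subseteq> {..<r} \<rightarrow>\<^sub>E {..<b}"
    and "\<And>I x. I \<subseteq> {..<r} \<Longrightarrow> int (card I) \<le> k \<Longrightarrow> x \<in> I \<rightarrow>\<^sub>E {..<b} \<Longrightarrow>
           measure_pmf.prob \<Omega> {\<omega>. \<forall>i\<in>I. \<omega> i = x i} = (1 / real b) ^ card I"
  shows "measure_pmf.prob \<Omega>
           {\<omega>. \<bar>real (card (\<omega> ` {..<r})) - rho b r\<bar> > 9 * real b powr (-1/2) * real r}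
         \<le> 2 powr (-6)"
proof -
  define m where "m = nat k"
  define f where "f \<omega> = real (card (\<omega> ` {..<r})) - rho b r" for \<omega> :: "nat \<Rightarrow> nat"
  define \<delta> where "\<delta> = 9 * real b powr (-1/2) * real r"
  have fin: "finite (set_pmf \<Omega>)"
    using assms(4) by (rule finite_subset) (simp add: finite_PiE)
  have "0 \<le> ln (real b)" using assms(1) by simp
  then have m: "16 \<le> m" "2 * ln (real b) \<le> real m" and k: "0 \<le> k"
    using assms(3) unfolding m_def by linarith+
  have unif: "kwise_uniform \<Omega> m {..<r} {..<b}"
    using assms(5) k unfolding kwise_uniform_def m_def by (simp add: le_nat_iff)
  have moment: "measure_pmf.expectation \<Omega> (\<lambda>\<omega>. f \<omega>^2) \<le> 5/4 * real r^2 / real b"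
    using kwise_uniform_card_image_second_moment[OF unif assms(4)] assms(1,2) m
      le_two_power_if_ln_le[of "real b" m]
    unfolding f_def by (simp add: lessThan_empty_iff)
  have delta_sq: "\<delta>^2 = 81 * real r^2 / real b"
    using assms(1) by (simp add: \<delta>_def powr_minus powr_half_sqrt field_simps)
  show ?thesis
  proof (cases "r = 0")
    case False
    then have "0 < \<delta>" using assms(1) by (simp add: \<delta>_def)
    then have "measure_pmf.prob \<Omega> {\<omega>. \<delta> < \<bar>f \<omega>\<bar>} \<le> measure_pmf.expectation \<Omega> (\<lambda>\<omega>. f \<omega>^2) / \<delta>^2"
      by (rule prob_abs_gt_le_second_moment[OF fin])
    also have "\<dots> \<le> (5/4 * real r^2 / real b) / (81 * real r^2 / real b)"
      unfolding delta_sq using moment by (rule divide_right_mono) simp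
    also have "\<dots> \<le> 2 powr (-6)"
      using False assms(1) by (simp add: powr_minus field_simps)
    finally show ?thesis unfolding f_def \<delta>_def .
  qed (simp add: rho_def)
qed

end
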